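(* Let $\Omega\subset\mathbb{R}^n$ be a bounded convex domain with smooth boundary and outer unit normal $\nu$, let $\vec f:\Omega\times\mathbb{R}\times[0,\infty)\to\mathbb{R}^{n+1}$, and let $u$ be a classical solution, $C^2$ up to $\partial\Omega$ in space for each $t>0$, of \[ \frac{\partial_t u}{\sqrt{1+|du|^2}}=\operatorname{div}\Big(\frac{du}{\sqrt{1+|du|^2}}\Big)+\vec f(x,u,t)\cdot\vec n\ \text{ in }\Omega,\ t>0,\qquad du\cdot\nu|_{\partial\Omega}=0,\ t>0, \] with $\vec n=\frac{1}{\sqrt{1+|du|^2}}(-du,1)$. Let $v:=\sqrt{1+|du|^2}$. Then for all $t>0$, \[ (D_{\Gamma_t}v\cdot\vec\nu)\big|_{\partial(\Omega\times\mathbb{R})}\le 0 . \]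
   Context: $\Gamma_t=\{(x,u(x,t)):x\in\Omega\}$. $v$ is regarded as a function on $\Omega\times\mathbb{R}$ independent of $x_{n+1}$, $D$ is the gradient in $\mathbb{R}^{n+1}$, and $D_{\Gamma_t}v:=Dv-(Dv\cdot\vec n)\vec n$ is its tangential gradient along $\Gamma_t$. $\vec\nu=(\nu,0)$ is the outer unit normal of the cylinder $\Omega\times\mathbb{R}$; the inequality is evaluated at the boundary points $(x,u(x,t))$, $x\in\partial\Omega$. *)

theory Defs
  imports "HOL-Analysis.Analysis"
begin

text \<open>Gradient of a real function on R^n, taken as the Frechet derivative
  within a set S (for S = closure of a convex domain this gives the
  derivative up to the boundary; at interior points it is the usual gradient).\<close>
definition gradw :: "(real^'n) set \<Rightarrow> (real^'n \<Rightarrow> real) \<Rightarrow> real^'n \<Rightarrow> real^'n" where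
  "gradw S g x = (\<chi> i. frechet_derivative g (at x within S) (axis i 1))"

definition divw :: "(real^'n) set \<Rightarrow> (real^'n \<Rightarrow> real^'n) \<Rightarrow> real^'n \<Rightarrow> real" where
  "divw S F x = (\<Sum>i\<in>UNIV. gradw S (\<lambda>y. F y $ i) x $ i)"

definition C2_upto :: "(real^'n) set \<Rightarrow> (real^'n \<Rightarrow> real) \<Rightarrow> bool" where
  "C2_upto S g \<longleftrightarrow>
     (\<forall>x\<in>S. g differentiable (at x within S)) \<and>
     (\<forall>i. \<forall>x\<in>S. (\<lambda>y. gradw S g y $ i) differentiable (at x within S)) \<and>
     (\<forall>i j. continuous_on S (\<lambda>y. gradw S (\<lambda>z. gradw S g z $ i) y $ j))"

fun Ck :: "nat \<Rightarrow> (real^'n \<Rightarrow> real) \<Rightarrow> bool" where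
  "Ck 0 g = continuous_on UNIV g"
| "Ck (Suc k) g = ((\<forall>x. g differentiable (at x)) \<and>
                   (\<forall>i. Ck k (\<lambda>x. frechet_derivative g (at x) (axis i 1))))"

definition smooth_fun :: "(real^'n \<Rightarrow> real) \<Rightarrow> bool" where
  "smooth_fun g \<longleftrightarrow> (\<forall>k. Ck k g)"

end

theory Submission
  imports Defs
begin

text \<open>
  At a boundary point the Neumann condition says that \<open>du\<close> is tangent to \<open>\<partial>\<Omega>\<close>, so the graph
  normal \<open>n\<close> is orthogonal to \<open>(\<nu>, 0)\<close> and the claim reduces to \<open>\<partial>\<^sub>\<nu> v \<le> 0\<close>. As
  \<open>v = sqrt (1 + |du|\<^sup>2)\<close> and the Hessian of \<open>u\<close> is symmetric up to the boundary (Schwarz in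
  \<open>\<Omega>\<close>, then continuity), \<open>\<partial>\<^sub>\<nu> v = D\<^sup>2u(du, \<nu>) / v\<close>. Writing \<open>\<Omega> = {\<rho> < 0}\<close>, the function
  \<open>du \<bullet> \<nabla>\<rho>\<close> vanishes on \<open>\<partial>\<Omega>\<close>, so its derivative in the tangential direction \<open>du\<close> vanishes:
  \<open>D\<^sup>2u(du, \<nabla>\<rho>) = - D\<^sup>2\<rho>(du, du)\<close>. Convexity of \<open>\<Omega>\<close> makes \<open>D\<^sup>2\<rho>\<close> nonnegative on tangent
  vectors. Only the Neumann condition and convexity enter.
\<close>

lemma has_derivative_gradw:
  assumes "g differentiable (at x within S)"
  shows "(g has_derivative (\<lambda>v. gradw S g x \<bullet> v)) (at x within S)"
proof -
  let ?L = "frechet_derivative g (at x within S)"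
  have deriv: "(g has_derivative ?L) (at x within S)"
    using assms frechet_derivative_works by blast
  then have "linear ?L"
    by (rule has_derivative_linear)
  have "?L v = gradw S g x \<bullet> v" for v
  proof -
    have "?L v = ?L (\<Sum>k\<in>UNIV. v $ k *\<^sub>R axis k 1)"
      using basis_expansion[of v] by (simp add: scalar_mult_eq_scaleR)
    also have "\<dots> = (\<Sum>k\<in>UNIV. v $ k * ?L (axis k 1))"
      using \<open>linear ?L\<close> by (simp add: linear_sum linear_scale)
    finally show ?thesis
      by (simp add: inner_vec_def gradw_def mult.commute)
  qed
  then have "?L = (\<lambda>v. gradw S g x \<bullet> v)"
    by (rule ext)
  with deriv show ?thesis
    by simp
qed

lemma has_derivative_matrix_iff_rows:
  fixes f :: "real^'n \<Rightarrow> real^'m" and M :: "real^'n^'m"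
  shows "(f has_derivative (\<lambda>v. M *v v)) (at x within S) \<longleftrightarrow>
   (\<forall>k. ((\<lambda>y. f y $ k) has_derivative (\<lambda>v. M $ k \<bullet> v)) (at x within S))"
  unfolding has_derivative_componentwise_within[of f]
proof (intro iffI allI ballI)
  fix k
  assume "\<forall>i\<in>Basis. ((\<lambda>y. f y \<bullet> i) has_derivative (\<lambda>v. (M *v v) \<bullet> i)) (at x within S)"
  then have "((\<lambda>y. f y \<bullet> axis k 1) has_derivative (\<lambda>v. (M *v v) \<bullet> axis k 1)) (at x within S)"
    by (auto simp: Basis_vec_def)
  then show "((\<lambda>y. f y $ k) has_derivative (\<lambda>v. M $ k \<bullet> v)) (at x within S)"
    by (simp add: inner_axis matrix_vector_mul_component)
next
  fix i :: "real^'m"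
  assume "\<forall>k. ((\<lambda>y. f y $ k) has_derivative (\<lambda>v. M $ k \<bullet> v)) (at x within S)" and "i \<in> Basis"
  then show "((\<lambda>y. f y \<bullet> i) has_derivative (\<lambda>v. (M *v v) \<bullet> i)) (at x within S)"
    by (auto simp: Basis_vec_def inner_axis matrix_vector_mul_component)
qed

lemma has_derivative_zero_vanishes_on_chords:
  fixes L :: "'a::real_normed_vector \<Rightarrow> 'b::real_normed_vector"
  assumes "convex S" "x \<in> S" "q \<in> S"
    and zero_deriv: "((\<lambda>y. 0) has_derivative L) (at x within S)"
  shows "L (q - x) = 0"
proof -
  let ?\<gamma> = "\<lambda>\<tau>::real. x + \<tau> *\<^sub>R (q - x)"
  have "?\<gamma> ` {0..1} \<subseteq> S"
  proof
    fix y assume "y \<in> ?\<gamma> ` {0..1}"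
    then obtain \<tau> where "\<tau> \<in> {0..1}" "y = (1 - \<tau>) *\<^sub>R x + \<tau> *\<^sub>R q"
      by (auto simp: algebra_simps)
    then show "y \<in> S"
      using convexD_alt[OF assms(1-3)] by auto
  qed
  moreover have "(?\<gamma> has_derivative (\<lambda>\<tau>. \<tau> *\<^sub>R (q - x))) (at 0 within {0..1})"
    by (auto intro!: derivative_eq_intros)
  ultimately have "((\<lambda>\<tau>::real. 0) has_derivative (\<lambda>\<tau>. L (\<tau> *\<^sub>R (q - x)))) (at 0 within {0..1})"
    using diff_chain_within[of ?\<gamma> _ 0 "{0..1}" "\<lambda>y. 0" L]
      has_derivative_subset[OF zero_deriv] by (simp add: o_def)
  moreover have "((\<lambda>\<tau>::real. 0::'b) has_derivative (\<lambda>\<tau>. 0)) (at 0 within {0..1})"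
    by simp
  ultimately have "(\<lambda>\<tau>. L (\<tau> *\<^sub>R (q - x))) = (\<lambda>\<tau>. 0)"
    using frechet_derivative_unique_within_closed_interval[of 0 1 0 "\<lambda>\<tau>::real. 0::'b"]
    by (simp add: cbox_interval)
  then show ?thesis
    by (metis scaleR_one)
qed

lemma has_derivative_unique_convex:
  fixes f :: "'a::real_normed_vector \<Rightarrow> 'b::real_normed_vector"
  assumes S: "convex S" "interior S \<noteq> {}" "x \<in> S"
    and f': "(f has_derivative f') (at x within S)"
    and f'': "(f has_derivative f'') (at x within S)"
  shows "f' = f''"
proof -
  define L where "L h = f' h - f'' h" for h
  have zero_deriv: "((\<lambda>y. 0) has_derivative L) (at x within S)"
    using has_derivative_diff[OF f' f''] by (simp add: L_def[abs_def])
  have lin: "linear L"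
    using zero_deriv by (rule has_derivative_linear)
  obtain p r where "r > 0" and ball: "ball p r \<subseteq> S"
    using S(2) by (metis all_not_in_conv mem_interior)
  have L_small: "L w = 0" if "norm w < r" for w
  proof -
    have "p + w \<in> S" "p \<in> S"
      using ball \<open>r > 0\<close> that by (auto simp: dist_norm)
    then show ?thesis
      using has_derivative_zero_vanishes_on_chords[OF S(1,3) _ zero_deriv]
        linear_diff[OF lin, of "p + w - x" "p - x"] by simp
  qed
  have "L w = 0" for w
  proof -
    define c where "c = r / (2 * (norm w + 1))"
    have "0 < 2 * (norm w + 1)"
      by (simp add: add_nonneg_pos)
    then have "c > 0" "norm (c *\<^sub>R w) < r"
      using \<open>r > 0\<close> by (auto simp: c_def field_simps add_nonneg_pos)
    then show ?thesis
      using L_small linear_scale[OF lin, of c w] by simp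
  qed
  then show ?thesis
    by (auto simp: L_def fun_eq_iff)
qed

lemma gradw_eqI:
  assumes "convex S" "interior S \<noteq> {}" "x \<in> S"
    and "(g has_derivative (\<lambda>v. a \<bullet> v)) (at x within S)"
  shows "gradw S g x = a"
proof -
  have "g differentiable (at x within S)"
    using assms(4) by (rule differentiableI)
  then have "frechet_derivative g (at x within S) = (\<lambda>v. a \<bullet> v)"
    using has_derivative_unique_convex[OF assms(1-3) _ assms(4)] frechet_derivative_works by blast
  then show ?thesis
    by (simp add: gradw_def vec_eq_iff inner_axis)
qed

lemma has_real_derivative_along_line:
  fixes F :: "'a::real_normed_vector \<Rightarrow> real"
  assumes "(F has_derivative F') (at (x + \<tau> *\<^sub>R h))"
  shows "((\<lambda>\<tau>. F (x + \<tau> *\<^sub>R h)) has_real_derivative F' h) (at \<tau>)"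
proof -
  have "((\<lambda>\<tau>. x + \<tau> *\<^sub>R h) has_derivative (\<lambda>d. d *\<^sub>R h)) (at \<tau>)"
    by (auto intro!: derivative_eq_intros)
  from has_derivative_compose[OF this assms] show ?thesis
    using linear_scale[OF has_derivative_linear[OF assms]]
    by (auto intro: has_derivative_imp_has_field_derivative simp: mult.commute)
qed

lemma mvt_along_segment:
  fixes F :: "'a::real_inner \<Rightarrow> real"
  assumes "0 \<le> s"
    and "\<And>\<tau>. \<tau> \<in> {0..s} \<Longrightarrow> (F has_derivative (\<lambda>v. D (x + \<tau> *\<^sub>R h) \<bullet> v)) (at (x + \<tau> *\<^sub>R h))"
  shows "\<exists>\<tau>\<in>{0..s}. F (x + s *\<^sub>R h) - F x = s * (D (x + \<tau> *\<^sub>R h) \<bullet> h)"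
proof (cases "s = 0")
  case False
  then have "0 < s"
    using assms(1) by simp
  then obtain \<tau> where "0 < \<tau>" "\<tau> < s"
      "F (x + s *\<^sub>R h) - F (x + 0 *\<^sub>R h) = (s - 0) * (D (x + \<tau> *\<^sub>R h) \<bullet> h)"
    using MVT2[of 0 s "\<lambda>\<tau>. F (x + \<tau> *\<^sub>R h)" "\<lambda>\<tau>. D (x + \<tau> *\<^sub>R h) \<bullet> h"]
      has_real_derivative_along_line[where F' = "\<lambda>v. D _ \<bullet> v", OF assms(2)] by auto
  then show ?thesis
    by auto
qed auto

lemma second_difference_mvt:
  fixes U :: "real^'n \<Rightarrow> real" and G :: "real^'n \<Rightarrow> real^'n" and H :: "real^'n \<Rightarrow> real^'n^'n"
  assumes dU: "\<And>z. z \<in> A \<Longrightarrow> (U has_derivative (\<lambda>v. G z \<bullet> v)) (at z)"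
    and dG: "\<And>z. z \<in> A \<Longrightarrow> (G has_derivative (\<lambda>v. H z *v v)) (at z)"
    and parallelogram: "\<And>\<sigma> \<tau>. \<sigma> \<in> {0..1} \<Longrightarrow> \<tau> \<in> {0..1} \<Longrightarrow> y + \<sigma> *\<^sub>R a + \<tau> *\<^sub>R b \<in> A"
  shows "\<exists>\<sigma>\<in>{0..1}. \<exists>\<tau>\<in>{0..1}.
    U (y + a + b) - U (y + a) - U (y + b) + U y = (H (y + \<sigma> *\<^sub>R a + \<tau> *\<^sub>R b) *v b) \<bullet> a"
proof -
  have "((\<lambda>z. U (z + b) - U z) has_derivative (\<lambda>v. (G (y + \<sigma> *\<^sub>R a + b) - G (y + \<sigma> *\<^sub>R a)) \<bullet> v))
      (at (y + \<sigma> *\<^sub>R a))" if "\<sigma> \<in> {0..1}" for \<sigma>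
  proof -
    have shift: "((\<lambda>z. z + b) has_derivative (\<lambda>v. v)) (at (y + \<sigma> *\<^sub>R a))"
      by (auto intro!: derivative_eq_intros)
    have "y + \<sigma> *\<^sub>R a + b \<in> A" "y + \<sigma> *\<^sub>R a \<in> A"
      using parallelogram[OF that, of 1] parallelogram[OF that, of 0] by simp_all
    from has_derivative_diff[OF has_derivative_compose[OF shift dU[OF this(1)]] dU[OF this(2)]]
    show ?thesis
      by (simp add: inner_diff_left)
  qed
  then obtain \<sigma> where "\<sigma> \<in> {0..1}"
    and first: "U (y + a + b) - U (y + a) - U (y + b) + U y = a \<bullet> G (y + \<sigma> *\<^sub>R a + b) - a \<bullet> G (y + \<sigma> *\<^sub>R a)"
    using mvt_along_segment[of 1 "\<lambda>z. U (z + b) - U z" "\<lambda>z. G (z + b) - G z" y a]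
    by (auto simp: inner_diff_left inner_commute[of a])
  have "((\<lambda>z. a \<bullet> G z) has_derivative (\<lambda>v. (a v* H (y + \<sigma> *\<^sub>R a + \<tau> *\<^sub>R b)) \<bullet> v))
      (at (y + \<sigma> *\<^sub>R a + \<tau> *\<^sub>R b))" if "\<tau> \<in> {0..1}" for \<tau>
    using has_derivative_inner_right[OF dG[OF parallelogram[OF \<open>\<sigma> \<in> {0..1}\<close> that]], of a]
    by (simp add: dot_lmul_matrix)
  then obtain \<tau> where \<tau>: "\<tau> \<in> {0..1}"
    and "a \<bullet> G (y + \<sigma> *\<^sub>R a + b) - a \<bullet> G (y + \<sigma> *\<^sub>R a) = (a v* H (y + \<sigma> *\<^sub>R a + \<tau> *\<^sub>R b)) \<bullet> b"
    using mvt_along_segment[of 1 "\<lambda>z. a \<bullet> G z" "\<lambda>z. a v* H z" "y + \<sigma> *\<^sub>R a" b] by auto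
  with first have "U (y + a + b) - U (y + a) - U (y + b) + U y = (H (y + \<sigma> *\<^sub>R a + \<tau> *\<^sub>R b) *v b) \<bullet> a"
    by (simp add: dot_lmul_matrix inner_commute[of a])
  with \<open>\<sigma> \<in> {0..1}\<close> \<tau> show ?thesis
    by blast
qed

lemma mixed_partials_agree_nearby:
  fixes U :: "real^'n \<Rightarrow> real" and G :: "real^'n \<Rightarrow> real^'n" and H :: "real^'n \<Rightarrow> real^'n^'n"
  assumes dU: "\<And>z. z \<in> ball y e \<Longrightarrow> (U has_derivative (\<lambda>v. G z \<bullet> v)) (at z)"
    and dG: "\<And>z. z \<in> ball y e \<Longrightarrow> (G has_derivative (\<lambda>v. H z *v v)) (at z)"
    and "e > 0"
  shows "\<exists>p q. p \<in> ball y e \<and> q \<in> ball y e \<and> H p $ i $ j = H q $ j $ i"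
proof -
  define s where "s = e / 3"
  let ?a = "s *\<^sub>R axis i (1::real) :: real^'n" and ?b = "s *\<^sub>R axis j (1::real) :: real^'n"
  have near: "y + \<sigma> *\<^sub>R (s *\<^sub>R axis k 1) + \<tau> *\<^sub>R (s *\<^sub>R axis l 1) \<in> ball y e"
    if "\<sigma> \<in> {0..1}" "\<tau> \<in> {0..1}" for \<sigma> \<tau> k l
  proof -
    have "norm (\<sigma> *\<^sub>R (s *\<^sub>R axis k 1) + \<tau> *\<^sub>R (s *\<^sub>R axis l (1::real))) \<le> \<sigma> * s + \<tau> * s"
      using norm_triangle_ineq[of "\<sigma> *\<^sub>R (s *\<^sub>R axis k (1::real))" "\<tau> *\<^sub>R (s *\<^sub>R axis l 1)"] that \<open>e > 0\<close>
      by (simp add: s_def)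
    also have "\<dots> \<le> 1 * s + 1 * s"
      using that \<open>e > 0\<close> by (intro add_mono mult_right_mono) (auto simp: s_def)
    also have "\<dots> < e"
      using \<open>e > 0\<close> by (simp add: s_def)
    finally show ?thesis
      unfolding mem_ball dist_commute[of y] by (simp add: dist_norm)
  qed
  from second_difference_mvt[OF dU dG near] second_difference_mvt[OF dU dG near]
  obtain p q where "p \<in> ball y e" "q \<in> ball y e"
    and "U (y + ?a + ?b) - U (y + ?a) - U (y + ?b) + U y = (H p *v ?b) \<bullet> ?a"
    and "U (y + ?b + ?a) - U (y + ?b) - U (y + ?a) + U y = (H q *v ?a) \<bullet> ?b"
    using near by meson
  moreover from this have "s * s * H p $ i $ j = s * s * H q $ j $ i"
    by (simp add: algebra_simps inner_axis matrix_vector_mul_component)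
  then have "H p $ i $ j = H q $ j $ i"
    using \<open>e > 0\<close> by (simp add: s_def)
  ultimately show ?thesis
    by blast
qed

lemma mixed_partials_symmetric:
  fixes U :: "real^'n \<Rightarrow> real" and G :: "real^'n \<Rightarrow> real^'n" and H :: "real^'n \<Rightarrow> real^'n^'n"
  assumes A: "open A" "y \<in> A"
    and dU: "\<And>z. z \<in> A \<Longrightarrow> (U has_derivative (\<lambda>v. G z \<bullet> v)) (at z)"
    and dG: "\<And>z. z \<in> A \<Longrightarrow> (G has_derivative (\<lambda>v. H z *v v)) (at z)"
    and cont: "isCont (\<lambda>z. H z $ i $ j) y" "isCont (\<lambda>z. H z $ j $ i) y"
  shows "H y $ i $ j = H y $ j $ i"
proof (rule ccontr)
  assume "H y $ i $ j \<noteq> H y $ j $ i"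
  define \<epsilon> where "\<epsilon> = \<bar>H y $ i $ j - H y $ j $ i\<bar> / 2"
  have "\<epsilon> > 0"
    using \<open>H y $ i $ j \<noteq> H y $ j $ i\<close> by (simp add: \<epsilon>_def)
  then obtain d1 d2 where "d1 > 0" "d2 > 0"
    and close: "\<And>z. dist z y < d1 \<Longrightarrow> dist (H z $ i $ j) (H y $ i $ j) < \<epsilon>"
      "\<And>z. dist z y < d2 \<Longrightarrow> dist (H z $ j $ i) (H y $ j $ i) < \<epsilon>"
    using cont unfolding continuous_at_eps_delta by metis
  obtain r where "r > 0" "ball y r \<subseteq> A"
    using A open_contains_ball by blast
  define e where "e = min r (min d1 d2)"
  have "e > 0" "ball y e \<subseteq> A"
    using \<open>r > 0\<close> \<open>d1 > 0\<close> \<open>d2 > 0\<close> \<open>ball y r \<subseteq> A\<close> by (auto simp: e_def)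
  then obtain p q where "p \<in> ball y e" "q \<in> ball y e" "H p $ i $ j = H q $ j $ i"
    using mixed_partials_agree_nearby[of y e U G H] dU dG by blast
  moreover from this have "dist p y < d1" "dist q y < d2"
    by (auto simp: e_def dist_commute)
  then have "dist (H p $ i $ j) (H y $ i $ j) < \<epsilon>" "dist (H q $ j $ i) (H y $ j $ i) < \<epsilon>"
    using close by blast+
  ultimately show False
    unfolding \<epsilon>_def dist_real_def by (auto simp: abs_real_def split: if_splits)
qed

lemma negative_second_derivative_imp_strict_local_max:
  fixes \<phi> \<phi>' \<phi>'' :: "real \<Rightarrow> real"
  assumes d\<phi>: "\<And>\<tau>. (\<phi> has_real_derivative \<phi>' \<tau>) (at \<tau>)"
    and d\<phi>': "\<And>\<tau>. (\<phi>' has_real_derivative \<phi>'' \<tau>) (at \<tau>)"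
    and "isCont \<phi>'' 0" "\<phi>' 0 = 0" "\<phi>'' 0 < 0"
  shows "\<exists>s>0. \<phi> s < \<phi> 0 \<and> \<phi> (- s) < \<phi> 0"
proof -
  obtain \<delta> where \<delta>: "\<delta> > 0" and "\<And>\<tau>. dist \<tau> 0 < \<delta> \<Longrightarrow> dist (\<phi>'' \<tau>) (\<phi>'' 0) < - \<phi>'' 0"
    using assms(3,5) unfolding continuous_at_eps_delta by (metis neg_0_less_iff_less)
  then have concave: "\<phi>'' \<tau> < 0" if "\<bar>\<tau>\<bar> < \<delta>" for \<tau>
    using that by (fastforce simp: dist_real_def)
  have right: "\<phi>' \<tau> < 0" if "0 < \<tau>" "\<tau> < \<delta>" for \<tau>
    using DERIV_neg_imp_decreasing[OF that(1), of \<phi>'] d\<phi>' concave that assms(4) by fastforce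
  have left: "\<phi>' \<tau> > 0" if "- \<delta> < \<tau>" "\<tau> < 0" for \<tau>
    using DERIV_neg_imp_decreasing[OF that(2), of \<phi>'] d\<phi>' concave that assms(4) by fastforce
  define s where "s = \<delta> / 2"
  have s: "0 < s" "s < \<delta>"
    using \<delta> by (auto simp: s_def)
  obtain z where z: "0 < z" "z < s" and "\<phi> s - \<phi> 0 = s * \<phi>' z"
    using MVT2[OF s(1) d\<phi>] by auto
  moreover have "s * \<phi>' z < 0"
    using right[of z] z s by (simp add: mult_pos_neg)
  ultimately have "\<phi> s < \<phi> 0"
    by linarith
  obtain z' where z': "- s < z'" "z' < 0" and "\<phi> 0 - \<phi> (- s) = s * \<phi>' z'"
    using MVT2[of "- s" 0 \<phi> \<phi>'] d\<phi> s(1) by auto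
  moreover have "s * \<phi>' z' > 0"
    using left[of z'] z' s by simp
  ultimately have "\<phi> (- s) < \<phi> 0"
    by linarith
  with \<open>\<phi> s < \<phi> 0\<close> s(1) show ?thesis
    by blast
qed

lemma convex_sublevel_hessian_tangent_nonneg:
  fixes \<rho> :: "real^'n \<Rightarrow> real" and P :: "real^'n \<Rightarrow> real^'n" and Q :: "real^'n \<Rightarrow> real^'n^'n"
  assumes convex: "convex {z. \<rho> z < 0}" and "\<rho> x = 0"
    and d\<rho>: "\<And>z. (\<rho> has_derivative (\<lambda>v. P z \<bullet> v)) (at z)"
    and dP: "\<And>z. (P has_derivative (\<lambda>v. Q z *v v)) (at z)"
    and cont: "\<And>k l. isCont (\<lambda>z. Q z $ k $ l) x"
    and tangent: "P x \<bullet> h = 0"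
  shows "(Q x *v h) \<bullet> h \<ge> 0"
proof (rule ccontr)
  assume negative: "\<not> ?thesis"
  have "(Q (x + \<tau> *\<^sub>R h) *v h) \<bullet> h = (\<Sum>k\<in>UNIV. (\<Sum>l\<in>UNIV. Q (x + \<tau> *\<^sub>R h) $ k $ l * h $ l) * h $ k)" for \<tau>
    by (simp add: inner_vec_def matrix_vector_mult_def)
  moreover have "isCont (\<lambda>\<tau>. Q (x + \<tau> *\<^sub>R h) $ k $ l) 0" for k l
    using isCont_o2[where f = "\<lambda>\<tau>. x + \<tau> *\<^sub>R h" and a = 0 and g = "\<lambda>z. Q z $ k $ l"] cont by (simp add: continuous_intros)
  then have "isCont (\<lambda>\<tau>. \<Sum>k\<in>UNIV. (\<Sum>l\<in>UNIV. Q (x + \<tau> *\<^sub>R h) $ k $ l * h $ l) * h $ k) 0"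
    by (intro continuous_sum continuous_mult continuous_const)
  ultimately have "isCont (\<lambda>\<tau>. (Q (x + \<tau> *\<^sub>R h) *v h) \<bullet> h) 0"
    by simp
  then obtain s where "s > 0" "\<rho> (x + s *\<^sub>R h) < \<rho> x" "\<rho> (x + (- s) *\<^sub>R h) < \<rho> x"
    using negative_second_derivative_imp_strict_local_max[of "\<lambda>\<tau>. \<rho> (x + \<tau> *\<^sub>R h)"
        "\<lambda>\<tau>. P (x + \<tau> *\<^sub>R h) \<bullet> h" "\<lambda>\<tau>. (Q (x + \<tau> *\<^sub>R h) *v h) \<bullet> h"]
      has_real_derivative_along_line[OF d\<rho>] has_real_derivative_along_line[OF has_derivative_inner_left[OF dP]]
      tangent negative by force
  then have "x + s *\<^sub>R h \<in> {z. \<rho> z < 0}" "x - s *\<^sub>R h \<in> {z. \<rho> z < 0}"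
    using \<open>\<rho> x = 0\<close> by auto
  moreover have "(1/2) *\<^sub>R (x + s *\<^sub>R h) + (1/2) *\<^sub>R (x - s *\<^sub>R h) = x"
    by (simp add: scaleR_add_right scaleR_diff_right flip: scaleR_add_left)
  ultimately have "\<rho> x < 0"
    using convexD[OF convex, of _ _ "1/2" "1/2"] by fastforce
  with \<open>\<rho> x = 0\<close> show False
    by simp
qed

lemma first_order_approx_near_tangent:
  fixes \<rho> :: "'a::real_inner \<Rightarrow> real"
  assumes d\<rho>: "(\<rho> has_derivative (\<lambda>v. P \<bullet> v)) (at x)" and "\<rho> x = 0" "P \<noteq> 0"
    and tangent: "P \<bullet> h = 0" and "\<epsilon> > 0" "\<delta> > 0"
  shows "\<exists>s. 0 < s \<and> s < \<delta> \<and> (\<forall>r. \<bar>r\<bar> \<le> \<epsilon> * s \<longrightarrow>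
    \<bar>\<rho> (x + s *\<^sub>R h + r *\<^sub>R P) - r * (P \<bullet> P)\<bar> \<le> \<epsilon> * s * (P \<bullet> P) / 2)"
proof -
  define R where "R = norm h + \<epsilon> * norm P + 1"
  define \<mu> where "\<mu> = \<epsilon> * (P \<bullet> P) / (2 * R)"
  have "R > 0"
    using \<open>\<epsilon> > 0\<close> by (simp add: R_def add_nonneg_pos)
  then have "\<mu> > 0"
    using \<open>\<epsilon> > 0\<close> \<open>P \<noteq> 0\<close> by (simp add: \<mu>_def)
  then obtain d where "d > 0"
    and approx: "\<And>y. norm (y - x) < d \<Longrightarrow> \<bar>\<rho> y - \<rho> x - P \<bullet> (y - x)\<bar> \<le> \<mu> * norm (y - x)"
    using d\<rho> unfolding has_derivative_at_alt by force
  define s where "s = min (\<delta> / 2) (d / (2 * R))"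
  have s: "0 < s" "s < \<delta>" "s * R < d"
    using \<open>d > 0\<close> \<open>R > 0\<close> \<open>\<delta> > 0\<close> by (auto simp: s_def min_def field_simps)
  have "\<bar>\<rho> (x + s *\<^sub>R h + r *\<^sub>R P) - r * (P \<bullet> P)\<bar> \<le> \<epsilon> * s * (P \<bullet> P) / 2"
    if "\<bar>r\<bar> \<le> \<epsilon> * s" for r
  proof -
    have "norm (s *\<^sub>R h + r *\<^sub>R P) \<le> s * norm h + \<bar>r\<bar> * norm P"
      using norm_triangle_ineq[of "s *\<^sub>R h" "r *\<^sub>R P"] s by simp
    also have "\<dots> \<le> s * R"
      using mult_right_mono[OF that norm_ge_zero[of P]] s by (simp add: R_def algebra_simps)
    finally have near: "norm (s *\<^sub>R h + r *\<^sub>R P) \<le> s * R" .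
    have "P \<bullet> (s *\<^sub>R h + r *\<^sub>R P) = r * (P \<bullet> P)"
      using tangent by (simp add: inner_add_right)
    then have "\<bar>\<rho> (x + s *\<^sub>R h + r *\<^sub>R P) - r * (P \<bullet> P)\<bar> \<le> \<mu> * norm (s *\<^sub>R h + r *\<^sub>R P)"
      using approx[of "x + s *\<^sub>R h + r *\<^sub>R P"] near s \<open>\<rho> x = 0\<close> by (simp add: add.assoc)
    also have "\<dots> \<le> \<mu> * (s * R)"
      using near \<open>\<mu> > 0\<close> by simp
    also have "\<dots> = \<epsilon> * s * (P \<bullet> P) / 2"
      using \<open>R > 0\<close> by (simp add: \<mu>_def)
    finally show ?thesis .
  qed
  with s show ?thesis
    by blast
qed

lemma level_set_meets_tangent_wedge:
  fixes \<rho> :: "'a::real_inner \<Rightarrow> real"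
  assumes d\<rho>: "(\<rho> has_derivative (\<lambda>v. P \<bullet> v)) (at x)" and "\<rho> x = 0" "P \<noteq> 0"
    and tangent: "P \<bullet> h = 0" and cont: "continuous_on UNIV \<rho>"
    and "\<epsilon> > 0" "\<delta> > 0"
  shows "\<exists>s r. 0 < s \<and> s < \<delta> \<and> \<bar>r\<bar> \<le> \<epsilon> * s \<and> \<rho> (x + s *\<^sub>R h + r *\<^sub>R P) = 0"
proof -
  obtain s where s: "0 < s" "s < \<delta>"
    and approx: "\<And>r. \<bar>r\<bar> \<le> \<epsilon> * s \<Longrightarrow> \<bar>\<rho> (x + s *\<^sub>R h + r *\<^sub>R P) - r * (P \<bullet> P)\<bar> \<le> \<epsilon> * s * (P \<bullet> P) / 2"
    using first_order_approx_near_tangent[OF assms(1-4,6-7)] by blast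
  have "0 < \<epsilon> * s"
    using \<open>\<epsilon> > 0\<close> s(1) by simp
  then have "\<bar>\<rho> (x + s *\<^sub>R h + (- (\<epsilon> * s)) *\<^sub>R P) + \<epsilon> * s * (P \<bullet> P)\<bar> \<le> \<epsilon> * s * (P \<bullet> P) / 2"
      "\<bar>\<rho> (x + s *\<^sub>R h + (\<epsilon> * s) *\<^sub>R P) - \<epsilon> * s * (P \<bullet> P)\<bar> \<le> \<epsilon> * s * (P \<bullet> P) / 2"
    using approx[of "- (\<epsilon> * s)"] approx[of "\<epsilon> * s"] by simp_all
  moreover have "0 < \<epsilon> * s * (P \<bullet> P)"
    using \<open>0 < \<epsilon> * s\<close> \<open>P \<noteq> 0\<close> by simp
  ultimately have "\<rho> (x + s *\<^sub>R h + (- (\<epsilon> * s)) *\<^sub>R P) \<le> 0" "0 \<le> \<rho> (x + s *\<^sub>R h + (\<epsilon> * s) *\<^sub>R P)"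
    unfolding abs_le_iff by linarith+
  moreover have "continuous_on {- (\<epsilon> * s) .. \<epsilon> * s} (\<lambda>r. \<rho> (x + s *\<^sub>R h + r *\<^sub>R P))"
    by (intro continuous_on_compose2[OF cont] continuous_intros) auto
  ultimately obtain r where "- (\<epsilon> * s) \<le> r" "r \<le> \<epsilon> * s" "\<rho> (x + s *\<^sub>R h + r *\<^sub>R P) = 0"
    using IVT'[of "\<lambda>r. \<rho> (x + s *\<^sub>R h + r *\<^sub>R P)" "- (\<epsilon> * s)" 0 "\<epsilon> * s"] \<open>0 < \<epsilon> * s\<close> by auto
  moreover from this have "\<bar>r\<bar> \<le> \<epsilon> * s"
    by (simp add: abs_le_iff)
  ultimately show ?thesis
    using s by blast
qed

lemma derivative_small_along_tangent_wedge:
  fixes \<rho> :: "'a::real_inner \<Rightarrow> real" and g :: "'a \<Rightarrow> 'b::real_normed_vector"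
  assumes d\<rho>: "(\<rho> has_derivative (\<lambda>v. P \<bullet> v)) (at x)" and "\<rho> x = 0" "P \<noteq> 0"
    and tangent: "P \<bullet> h = 0" and cont: "continuous_on UNIV \<rho>"
    and dg: "(g has_derivative L) (at x within S)"
    and vanish: "\<And>z. \<rho> z = 0 \<Longrightarrow> z \<in> S \<and> g z = 0"
    and "\<epsilon> > 0" "\<eta> > 0"
  shows "\<exists>s r. 0 < s \<and> \<bar>r\<bar> \<le> \<epsilon> * s \<and> norm (L (s *\<^sub>R h + r *\<^sub>R P)) \<le> \<eta> * (s * (norm h + \<epsilon> * norm P + 1))"
proof -
  define R where "R = norm h + \<epsilon> * norm P + 1"
  have "R > 0"
    using \<open>\<epsilon> > 0\<close> by (simp add: R_def add_nonneg_pos)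
  obtain d where "d > 0"
    and approx: "\<And>y. y \<in> S \<Longrightarrow> norm (y - x) < d \<Longrightarrow> norm (g y - g x - L (y - x)) \<le> \<eta> * norm (y - x)"
    using dg \<open>\<eta> > 0\<close> unfolding has_derivative_within_alt by meson
  then obtain s r where s: "0 < s" "s < d / R" and r: "\<bar>r\<bar> \<le> \<epsilon> * s"
    and "\<rho> (x + s *\<^sub>R h + r *\<^sub>R P) = 0"
    using level_set_meets_tangent_wedge[OF assms(1-5,8), of "d / R"] \<open>R > 0\<close> by auto
  then have y: "x + s *\<^sub>R h + r *\<^sub>R P \<in> S" "g (x + s *\<^sub>R h + r *\<^sub>R P) = 0" and "g x = 0"
    using vanish \<open>\<rho> x = 0\<close> by auto
  have "norm (s *\<^sub>R h + r *\<^sub>R P) \<le> s * norm h + \<bar>r\<bar> * norm P"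
    using norm_triangle_ineq[of "s *\<^sub>R h" "r *\<^sub>R P"] s by simp
  also have "\<dots> \<le> s * R"
    using mult_right_mono[OF r norm_ge_zero[of P]] s by (simp add: R_def algebra_simps)
  finally have near: "norm (s *\<^sub>R h + r *\<^sub>R P) \<le> s * R" .
  moreover have "s * R < d"
    using s \<open>R > 0\<close> by (simp add: field_simps)
  ultimately have "norm (L (s *\<^sub>R h + r *\<^sub>R P)) \<le> \<eta> * norm (s *\<^sub>R h + r *\<^sub>R P)"
    using approx[OF y(1)] y(2) \<open>g x = 0\<close> by (simp add: add.assoc)
  also have "\<dots> \<le> \<eta> * (s * R)"
    using near \<open>\<eta> > 0\<close> by simp
  finally show ?thesis
    using s r unfolding R_def by blast
qed

lemma has_derivative_vanishing_on_level_set: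
  fixes \<rho> :: "'a::real_inner \<Rightarrow> real" and g :: "'a \<Rightarrow> 'b::real_normed_vector"
  assumes d\<rho>: "(\<rho> has_derivative (\<lambda>v. P \<bullet> v)) (at x)" and "\<rho> x = 0" "P \<noteq> 0"
    and tangent: "P \<bullet> h = 0" and cont: "continuous_on UNIV \<rho>"
    and dg: "(g has_derivative L) (at x within S)"
    and vanish: "\<And>z. \<rho> z = 0 \<Longrightarrow> z \<in> S \<and> g z = 0"
  shows "L h = 0"
proof (rule ccontr)
  assume "L h \<noteq> 0"
  define a where "a = norm (L h)"
  define \<epsilon> where "\<epsilon> = a / (4 * (norm (L P) + 1))"
  define \<eta> where "\<eta> = a / (4 * (norm h + \<epsilon> * norm P + 1))"
  have "a > 0"
    using \<open>L h \<noteq> 0\<close> by (simp add: a_def)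
  have "0 < 4 * (norm (L P) + 1)"
    by (simp add: add_nonneg_pos)
  then have \<epsilon>: "\<epsilon> > 0" "\<epsilon> * norm (L P) \<le> a / 4"
    using \<open>a > 0\<close> by (auto simp: \<epsilon>_def field_simps)
  then have R: "0 < norm h + \<epsilon> * norm P + 1"
    by (simp add: add_nonneg_pos)
  then have "\<eta> > 0"
    using \<open>a > 0\<close> by (simp add: \<eta>_def)
  have \<eta>: "\<eta> * (s * (norm h + \<epsilon> * norm P + 1)) = s * a / 4" for s
    using R by (simp add: \<eta>_def field_simps)
  then obtain s r where s: "0 < s" and r: "\<bar>r\<bar> \<le> \<epsilon> * s"
    and small: "norm (L (s *\<^sub>R h + r *\<^sub>R P)) \<le> s * a / 4"
    using derivative_small_along_tangent_wedge[OF assms \<epsilon>(1) \<open>\<eta> > 0\<close>] by (metis \<eta>)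
  have "linear L"
    using dg by (rule has_derivative_linear)
  then have "s * a = norm (L (s *\<^sub>R h + r *\<^sub>R P) - r *\<^sub>R L P)"
    using s by (simp add: a_def linear_add linear_scale)
  also have "\<dots> \<le> s * a / 4 + \<epsilon> * s * norm (L P)"
    using norm_triangle_ineq4[of "L (s *\<^sub>R h + r *\<^sub>R P)" "r *\<^sub>R L P"] small r
      mult_right_mono[OF r norm_ge_zero[of "L P"]] by simp
  also have "\<dots> \<le> s * a / 2"
    using mult_left_mono[OF \<epsilon>(2), of s] s by (simp add: field_simps)
  finally show False
    using s \<open>a > 0\<close> by simp
qed

lemma frontier_regular_sublevel_set:
  fixes \<rho> :: "'a::real_inner \<Rightarrow> real"
  assumes cont: "continuous_on UNIV \<rho>"
    and d\<rho>: "\<And>z. \<rho> z = 0 \<Longrightarrow> (\<rho> has_derivative (\<lambda>v. P z \<bullet> v)) (at z)"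
    and regular: "\<And>z. \<rho> z = 0 \<Longrightarrow> P z \<noteq> 0"
  shows "frontier {z. \<rho> z < 0} = {z. \<rho> z = 0}"
proof -
  have "open {z. \<rho> z < 0}"
    using cont by (simp add: open_Collect_less)
  then have frontier: "frontier {z. \<rho> z < 0} = closure {z. \<rho> z < 0} - {z. \<rho> z < 0}"
    by (simp add: frontier_def interior_open)
  have "closed {z. \<rho> z \<le> 0}"
    using cont by (simp add: closed_Collect_le)
  then have closure_le: "closure {z. \<rho> z < 0} \<subseteq> {z. \<rho> z \<le> 0}"
    by (intro closure_minimal) auto
  have closure_eq: "z \<in> closure {z. \<rho> z < 0}" if "\<rho> z = 0" for z
  proof -
    have "((\<lambda>\<tau>. \<rho> (z + \<tau> *\<^sub>R - P z)) has_real_derivative - (P z \<bullet> P z)) (at 0)"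
      using has_real_derivative_along_line[of \<rho> "\<lambda>v. P z \<bullet> v" z 0 "- P z"] d\<rho>[OF that] by simp
    moreover have "- (P z \<bullet> P z) < 0"
      using regular[OF that] by simp
    ultimately obtain d where "d > 0" and "\<forall>\<tau>>0. \<tau> < d \<longrightarrow> \<rho> (z + (0 + \<tau>) *\<^sub>R - P z) < \<rho> (z + 0 *\<^sub>R - P z)"
      by (blast dest: DERIV_neg_dec_right)
    then have descent: "\<rho> (z - \<tau> *\<^sub>R P z) < 0" if "0 < \<tau>" "\<tau> < d" for \<tau>
      using that \<open>\<rho> z = 0\<close> by simp
    show ?thesis
      unfolding closure_approachable
    proof (intro allI impI)
      fix e :: real
      assume "e > 0"
      define \<tau> where "\<tau> = min (d / 2) (e / (2 * norm (P z)))"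
      have "0 < \<tau>" "\<tau> < d" "\<tau> * norm (P z) < e"
        using \<open>d > 0\<close> \<open>e > 0\<close> regular[OF that] by (auto simp: \<tau>_def min_def field_simps)
      then show "\<exists>y\<in>{z. \<rho> z < 0}. dist y z < e"
        using descent by (intro bexI[of _ "z - \<tau> *\<^sub>R P z"]) (auto simp: dist_norm)
    qed
  qed
  show ?thesis
    unfolding frontier using closure_le closure_eq by fastforce
qed

locale convex_C2_domain =
  fixes \<Omega> :: "(real^'n) set" and \<rho> :: "real^'n \<Rightarrow> real"
  assumes open_domain: "open \<Omega>" and convex_domain: "convex \<Omega>" and nonempty_domain: "\<Omega> \<noteq> {}"
    and sublevel_domain: "\<Omega> = {x. \<rho> x < 0}"
    and C2_defining_function: "Ck 2 \<rho>"
    and regular_boundary: "\<And>x. \<rho> x = 0 \<Longrightarrow> gradw UNIV \<rho> x \<noteq> 0"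
begin

definition grad_\<rho> :: "real^'n \<Rightarrow> real^'n" where
  "grad_\<rho> = gradw UNIV \<rho>"

definition hess_\<rho> :: "real^'n \<Rightarrow> real^'n^'n" where
  "hess_\<rho> y = (\<chi> k. gradw UNIV (\<lambda>z. grad_\<rho> z $ k) y)"

lemma C2_\<rho>:
  "\<rho> differentiable (at z)" "(\<lambda>z. grad_\<rho> z $ k) differentiable (at z)"
  "continuous_on UNIV (\<lambda>z. hess_\<rho> z $ k $ l)"
  using C2_defining_function by (simp_all add: numeral_2_eq_2 grad_\<rho>_def hess_\<rho>_def gradw_def)

lemma has_derivative_\<rho>: "(\<rho> has_derivative (\<lambda>v. grad_\<rho> z \<bullet> v)) (at z)"
  using has_derivative_gradw[of \<rho> z UNIV] C2_\<rho>(1) by (simp add: grad_\<rho>_def)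

lemma has_derivative_grad_\<rho>: "(grad_\<rho> has_derivative (\<lambda>v. hess_\<rho> z *v v)) (at z)"
  using has_derivative_gradw[of "\<lambda>z. grad_\<rho> z $ _" z UNIV] C2_\<rho>(2)
  by (simp add: has_derivative_matrix_iff_rows hess_\<rho>_def)

lemma continuous_\<rho>: "continuous_on UNIV \<rho>"
  using C2_\<rho>(1) by (simp add: differentiable_imp_continuous_within continuous_at_imp_continuous_on)

lemma frontier_domain: "frontier \<Omega> = {x. \<rho> x = 0}"
  unfolding sublevel_domain
  using frontier_regular_sublevel_set[OF continuous_\<rho> has_derivative_\<rho>] regular_boundary
  by (simp add: grad_\<rho>_def)

end

locale neumann_on_convex_domain = convex_C2_domain \<Omega> \<rho> for \<Omega> :: "(real^'n) set" and \<rho> +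
  fixes u :: "real^'n \<Rightarrow> real"
  assumes C2_u: "C2_upto (closure \<Omega>) u"
    and neumann: "\<And>x. x \<in> frontier \<Omega> \<Longrightarrow> gradw (closure \<Omega>) u x \<bullet> grad_\<rho> x = 0"
begin

definition grad_u :: "real^'n \<Rightarrow> real^'n" where
  "grad_u = gradw (closure \<Omega>) u"

definition hess_u :: "real^'n \<Rightarrow> real^'n^'n" where
  "hess_u y = (\<chi> k. gradw (closure \<Omega>) (\<lambda>z. grad_u z $ k) y)"

lemma has_derivative_u:
  "y \<in> closure \<Omega> \<Longrightarrow> (u has_derivative (\<lambda>v. grad_u y \<bullet> v)) (at y within closure \<Omega>)"
  using C2_u by (auto simp: C2_upto_def grad_u_def intro: has_derivative_gradw)

lemma has_derivative_grad_u:
  "y \<in> closure \<Omega> \<Longrightarrow> (grad_u has_derivative (\<lambda>v. hess_u y *v v)) (at y within closure \<Omega>)"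
  using C2_u by (auto simp: C2_upto_def grad_u_def hess_u_def has_derivative_matrix_iff_rows
      intro: has_derivative_gradw)

lemma continuous_hess_u: "continuous_on (closure \<Omega>) (\<lambda>y. hess_u y $ k $ l)"
  using C2_u by (simp add: C2_upto_def grad_u_def hess_u_def)

lemma hess_u_symmetric:
  assumes "y \<in> closure \<Omega>"
  shows "hess_u y $ k $ l = hess_u y $ l $ k"
proof -
  have at_interior: "at z within closure \<Omega> = at z" if "z \<in> \<Omega>" for z
    using at_within_open_subset[OF that open_domain closure_subset] .
  have du: "(u has_derivative (\<lambda>v. grad_u z \<bullet> v)) (at z)"
    and dgrad: "(grad_u has_derivative (\<lambda>v. hess_u z *v v)) (at z)" if "z \<in> \<Omega>" for z
    using has_derivative_u[of z] has_derivative_grad_u[of z] closure_subset at_interior[OF that] that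
    by auto
  have cont: "isCont (\<lambda>z. hess_u z $ i $ j) z" if "z \<in> \<Omega>" for i j z
    using continuous_hess_u[of i j] that closure_subset at_interior[OF that]
    by (metis continuous_on_eq_continuous_within subsetD)
  have "hess_u z $ k $ l - hess_u z $ l $ k = 0" if "z \<in> \<Omega>" for z
    using mixed_partials_symmetric[OF open_domain that du dgrad cont[OF that] cont[OF that]] by simp
  moreover have "continuous_on (closure \<Omega>) (\<lambda>y. hess_u y $ k $ l - hess_u y $ l $ k)"
    by (intro continuous_on_diff continuous_hess_u)
  ultimately have "hess_u y $ k $ l - hess_u y $ l $ k = 0"
    using continuous_constant_on_closure[OF _ _ assms] by blast
  then show ?thesis
    by simp
qed

lemma hess_grad_u_normal_nonpos:
  assumes "x \<in> frontier \<Omega>"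
  shows "(hess_u x *v grad_u x) \<bullet> grad_\<rho> x \<le> 0"
proof -
  have frontier_closure: "frontier \<Omega> \<subseteq> closure \<Omega>"
    by (simp add: frontier_def)
  have x: "x \<in> closure \<Omega>" "\<rho> x = 0"
    using assms frontier_closure frontier_domain by auto
  have tangent: "grad_\<rho> x \<bullet> grad_u x = 0"
    using neumann[OF assms] by (simp add: grad_u_def inner_commute)
  have vanish: "z \<in> closure \<Omega> \<and> grad_u z \<bullet> grad_\<rho> z = 0" if "\<rho> z = 0" for z
    using that frontier_closure frontier_domain neumann by (auto simp: grad_u_def)
  have "((\<lambda>y. grad_u y \<bullet> grad_\<rho> y) has_derivative
      (\<lambda>v. grad_u x \<bullet> (hess_\<rho> x *v v) + (hess_u x *v v) \<bullet> grad_\<rho> x)) (at x within closure \<Omega>)"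
    using has_derivative_inner[OF has_derivative_grad_u[OF x(1)]
        has_derivative_at_withinI[OF has_derivative_grad_\<rho>]] .
  from has_derivative_vanishing_on_level_set[OF has_derivative_\<rho> x(2) _ tangent continuous_\<rho> this vanish]
  have "grad_u x \<bullet> (hess_\<rho> x *v grad_u x) + (hess_u x *v grad_u x) \<bullet> grad_\<rho> x = 0"
    using regular_boundary x(2) by (simp add: grad_\<rho>_def)
  moreover have "(hess_\<rho> x *v grad_u x) \<bullet> grad_u x \<ge> 0"
  proof (rule convex_sublevel_hessian_tangent_nonneg[OF _ x(2) has_derivative_\<rho> has_derivative_grad_\<rho> _ tangent])
    show "convex {z. \<rho> z < 0}"
      using convex_domain sublevel_domain by simp
    show "isCont (\<lambda>z. hess_\<rho> z $ k $ l) x" for k l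
      using C2_\<rho>(3) by (simp add: continuous_on_eq_continuous_at)
  qed
  ultimately show ?thesis
    by (simp add: inner_commute)
qed

lemma grad_u_vector_matrix_hess_u:
  "y \<in> closure \<Omega> \<Longrightarrow> grad_u y v* hess_u y = hess_u y *v grad_u y"
  by (simp add: vec_eq_iff vector_matrix_mult_def matrix_vector_mult_def hess_u_symmetric mult.commute)

lemma gradw_sqrt_one_plus_norm_grad_u:
  assumes "y \<in> closure \<Omega>"
  shows "gradw (closure \<Omega>) (\<lambda>z. sqrt (1 + (norm (grad_u z))\<^sup>2)) y
    = (1 / sqrt (1 + (norm (grad_u y))\<^sup>2)) *\<^sub>R (hess_u y *v grad_u y)"
proof (rule gradw_eqI)
  show "convex (closure \<Omega>)"
    using convex_domain by (rule convex_closure)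
  show "interior (closure \<Omega>) \<noteq> {}"
    using interior_maximal[OF closure_subset open_domain] nonempty_domain by blast
  have symmetric: "grad_u y \<bullet> (hess_u y *v v) = (hess_u y *v grad_u y) \<bullet> v" for v
    by (simp add: dot_lmul_matrix[symmetric] grad_u_vector_matrix_hess_u[OF assms])
  have "((\<lambda>z. grad_u z \<bullet> grad_u z) has_derivative (\<lambda>v. 2 * ((hess_u y *v grad_u y) \<bullet> v)))
      (at y within closure \<Omega>)"
    using has_derivative_inner[OF has_derivative_grad_u[OF assms] has_derivative_grad_u[OF assms]]
    by (simp add: inner_commute[of "hess_u y *v _" "grad_u y"] symmetric)
  from has_derivative_add[OF has_derivative_const this]
  have "((\<lambda>z. 1 + (norm (grad_u z))\<^sup>2) has_derivative (\<lambda>v. 2 * ((hess_u y *v grad_u y) \<bullet> v)))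
      (at y within closure \<Omega>)"
    by (simp add: power2_norm_eq_inner)
  moreover have "0 < 1 + (norm (grad_u y))\<^sup>2"
    by (simp add: add_pos_nonneg)
  ultimately have "((\<lambda>z. sqrt (1 + (norm (grad_u z))\<^sup>2)) has_derivative
      (\<lambda>v. 2 * ((hess_u y *v grad_u y) \<bullet> v) * (inverse (sqrt (1 + (norm (grad_u y))\<^sup>2)) / 2)))
      (at y within closure \<Omega>)"
    by (rule has_derivative_real_sqrt[rotated])
  then show "((\<lambda>z. sqrt (1 + (norm (grad_u z))\<^sup>2)) has_derivative
      (\<lambda>v. ((1 / sqrt (1 + (norm (grad_u y))\<^sup>2)) *\<^sub>R (hess_u y *v grad_u y)) \<bullet> v)) (at y within closure \<Omega>)"
    by (rule has_derivative_eq_rhs) (simp add: fun_eq_iff field_simps)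
qed (use assms in simp)

lemma normal_derivative_gradient_length_nonpos:
  assumes "x \<in> frontier \<Omega>"
  shows "gradw (closure \<Omega>) (\<lambda>z. sqrt (1 + (norm (grad_u z))\<^sup>2)) x \<bullet> grad_\<rho> x \<le> 0"
proof -
  have "x \<in> closure \<Omega>"
    using assms by (simp add: frontier_def)
  then show ?thesis
    using hess_grad_u_normal_nonpos[OF assms]
    by (simp add: gradw_sqrt_one_plus_norm_grad_u divide_nonpos_nonneg)
qed

end

theorem mainTheorem4:
  fixes \<Omega> :: "(real^'n) set"
    and \<rho> :: "real^'n \<Rightarrow> real"
    and \<nu> :: "real^'n \<Rightarrow> real^'n"
    and f :: "real^'n \<Rightarrow> real \<Rightarrow> real \<Rightarrow> (real^'n) \<times> real"
    and u :: "real^'n \<Rightarrow> real \<Rightarrow> real"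
  assumes dom: "open \<Omega>" "connected \<Omega>" "\<Omega> \<noteq> {}" "bounded \<Omega>" "convex \<Omega>"
    and smooth_bdry: "smooth_fun \<rho>" "\<Omega> = {x. \<rho> x < 0}"
      "\<forall>x. \<rho> x = 0 \<longrightarrow> gradw UNIV \<rho> x \<noteq> 0"
    and normal: "\<forall>x\<in>frontier \<Omega>. \<nu> x = (1 / norm (gradw UNIV \<rho> x)) *\<^sub>R gradw UNIV \<rho> x"
    and C2: "\<forall>t>0. C2_upto (closure \<Omega>) (\<lambda>y. u y t)"
    and time_diff: "\<forall>x\<in>\<Omega>. \<forall>t>0. (\<lambda>s. u x s) differentiable (at t)"
    and pde: "\<forall>x\<in>\<Omega>. \<forall>t>0.
       (let du = (\<lambda>y. gradw (closure \<Omega>) (\<lambda>z. u z t) y);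
            W = (\<lambda>y. sqrt (1 + (norm (du y))\<^sup>2));
            nvec = ((- 1 / W x) *\<^sub>R du x, 1 / W x)
        in deriv (\<lambda>s. u x s) t / W x
             = divw (closure \<Omega>) (\<lambda>y. (1 / W y) *\<^sub>R du y) x + f x (u x t) t \<bullet> nvec)"
    and neumann: "\<forall>x\<in>frontier \<Omega>. \<forall>t>0. gradw (closure \<Omega>) (\<lambda>z. u z t) x \<bullet> \<nu> x = 0"
  shows "\<forall>t>0. \<forall>x\<in>frontier \<Omega>.
     (let du = gradw (closure \<Omega>) (\<lambda>z. u z t) x;
          W = sqrt (1 + (norm du)\<^sup>2);
          v = (\<lambda>y. sqrt (1 + (norm (gradw (closure \<Omega>) (\<lambda>z. u z t) y))\<^sup>2));
          nvec = ((- 1 / W) *\<^sub>R du, 1 / W) :: (real^'n) \<times> real;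
          Dv = (gradw (closure \<Omega>) v x, 0) :: (real^'n) \<times> real;
          DGv = Dv - (Dv \<bullet> nvec) *\<^sub>R nvec
      in DGv \<bullet> (\<nu> x, 0) \<le> 0)"
proof -
  interpret convex_C2_domain \<Omega> \<rho>
    using dom smooth_bdry by unfold_locales (auto simp: smooth_fun_def)
  have normal_direction: "\<nu> x = (1 / norm (grad_\<rho> x)) *\<^sub>R grad_\<rho> x" "grad_\<rho> x \<noteq> 0"
    if "x \<in> frontier \<Omega>" for x
    using normal that frontier_domain regular_boundary by (auto simp: grad_\<rho>_def)
  have "gradw (closure \<Omega>) (\<lambda>y. sqrt (1 + (norm (gradw (closure \<Omega>) (\<lambda>z. u z t) y))\<^sup>2)) x \<bullet> \<nu> x \<le> 0"
    if "t > 0" "x \<in> frontier \<Omega>" for t x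
  proof -
    interpret neumann_on_convex_domain \<Omega> \<rho> "\<lambda>z. u z t"
    proof
      show "C2_upto (closure \<Omega>) (\<lambda>z. u z t)"
        using C2 \<open>t > 0\<close> by blast
      show "gradw (closure \<Omega>) (\<lambda>z. u z t) y \<bullet> grad_\<rho> y = 0" if "y \<in> frontier \<Omega>" for y
        using neumann that \<open>t > 0\<close> normal_direction[OF that] by auto
    qed
    show ?thesis
      using normal_derivative_gradient_length_nonpos[OF that(2)] normal_direction[OF that(2)]
      by (simp add: grad_u_def divide_nonpos_nonneg)
  qed
  \<comment> \<open>\<open>(\<nu> x, 0)\<close> is orthogonal to the graph normal because \<open>du \<bullet> \<nu> = 0\<close>.\<close>
  then show ?thesis
    using neumann by (simp add: Let_def inner_diff_left)
qed

end
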